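(* Let $n,t,k$ be positive integers with $n>(2k-1)t$ and let $G=G_n\langle t,2t,\ldots,kt\rangle$. Let $s$ be the integer with $1\le s\le t$ and $s\equiv n\pmod t$. Then $$\theta_v(G)=s\left\lceil\frac{\lceil n/t\rceil}{k+1}\right\rceil+(t-s)\left\lceil\frac{\lfloor n/t\rfloor}{k+1}\right\rceil.$$
   Context: For integers $n\ge 2$, $k\ge 1$ and $1\le t_1<t_2<\cdots<t_k\le n-1$, the Toeplitz graph $G_n\langle t_1,\ldots,t_k\rangle$ is the simple graph with vertex set $[n]=\{1,\ldots,n\}$ in which two distinct vertices $i,j$ are adjacent if and only if $|i-j|\in\{t_1,\ldots,t_k\}$. A clique cover of a graph is a set of cliques such that every vertex lies in at least one of them; $\theta_v(G)$, the (vertex) clique cover number, is the minimum size of a clique cover of $G$. *)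

theory Defs
  imports Complex_Main
begin

definition toeplitz_adj :: "nat \<Rightarrow> nat set \<Rightarrow> nat \<Rightarrow> nat \<Rightarrow> bool" where
  "toeplitz_adj n T i j \<longleftrightarrow> i \<in> {1..n} \<and> j \<in> {1..n} \<and> i \<noteq> j \<and>
     (if i \<le> j then j - i else i - j) \<in> T"

definition is_clique :: "nat \<Rightarrow> nat set \<Rightarrow> nat set \<Rightarrow> bool" where
  "is_clique n T K \<longleftrightarrow> K \<subseteq> {1..n} \<and>
     (\<forall>i\<in>K. \<forall>j\<in>K. i \<noteq> j \<longrightarrow> toeplitz_adj n T i j)"

definition is_clique_cover :: "nat \<Rightarrow> nat set \<Rightarrow> nat set set \<Rightarrow> bool" where
  "is_clique_cover n T C \<longleftrightarrow> (\<forall>K\<in>C. is_clique n T K) \<and> \<Union>C = {1..n}"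

definition theta_v :: "nat \<Rightarrow> nat set \<Rightarrow> nat" where
  "theta_v n T = (LEAST m. \<exists>C. is_clique_cover n T C \<and> finite C \<and> card C = m)"

end

(*
  Vertices congruent mod t form t disjoint arithmetic progressions, and every edge of
  G = G_n<t, 2t, ..., kt> joins two vertices of the same progression. Along a progression
  with m members, G restricts to G_m<1, ..., k>: any k + 1 consecutive members form a clique,
  and a clique spans at most k + 1 of them. Hence the progression needs exactly
  ceil(m / (k + 1)) cliques, and summing over the s progressions of length ceil(n / t) and the
  t - s progressions of length floor(n / t) gives the formula.
*)

theory Submission
  imports Defs
begin

abbreviation multiples_upto :: "nat \<Rightarrow> nat \<Rightarrow> nat set" where
  "multiples_upto t k \<equiv> (\<lambda>i. i * t) ` {1..k}"

lemma toeplitz_adj_sym: "toeplitz_adj n T i j \<Longrightarrow> toeplitz_adj n T j i"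
  unfolding toeplitz_adj_def by auto

lemma theta_v_le:
  assumes "is_clique_cover n T C" "finite C"
  shows "theta_v n T \<le> card C"
  unfolding theta_v_def by (rule Least_le) (use assms in blast)

lemma singletons_clique_cover: "is_clique_cover n T ((\<lambda>x. {x}) ` {1..n})"
  unfolding is_clique_cover_def is_clique_def by auto

lemma theta_v_attained: "\<exists>C. is_clique_cover n T C \<and> finite C \<and> card C = theta_v n T"
  unfolding theta_v_def by (rule LeastI_ex) (use singletons_clique_cover in blast)

lemma less_mult_add_iff:
  fixes r p t j q :: nat
  assumes "r < t" "p < t"
  shows "t * j + r < t * q + p \<longleftrightarrow> j < q + (if r < p then 1 else 0)"
proof -
  consider "j < q" | "j = q" | "q < j" by linarith
  then show ?thesis
  proof cases
    case 1
    then have "t * j + t \<le> t * q" by (metis add.commute mult_Suc_right mult_le_mono2 Suc_leI)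
    then show ?thesis using 1 assms by auto
  next
    case 3
    then have "t * q + t \<le> t * j" by (metis add.commute mult_Suc_right mult_le_mono2 Suc_leI)
    then show ?thesis using 3 assms by auto
  qed auto
qed

lemma div_less_ceiling_div:
  fixes j m k :: nat
  assumes "j < m"
  shows "j div (k + 1) < (m + k) div (k + 1)"
proof -
  have "(j div (k + 1) + 1) * (k + 1) \<le> m + k"
    using assms div_times_less_eq_dividend[of j "k + 1"] by (simp add: algebra_simps)
  then have "(j div (k + 1) + 1) * (k + 1) div (k + 1) \<le> (m + k) div (k + 1)"
    by (rule div_le_mono)
  moreover have "(j div (k + 1) + 1) * (k + 1) div (k + 1) = j div (k + 1) + 1"
    by (rule nonzero_mult_div_cancel_right) simp
  ultimately show ?thesis by linarith
qed

lemma ceiling_div_le_of_le_mult: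
  fixes m a k :: nat
  assumes "m \<le> a * (k + 1)"
  shows "(m + k) div (k + 1) \<le> a"
proof -
  have "m + k < (a + 1) * (k + 1)" using assms by (simp add: algebra_simps)
  then have "(m + k) div (k + 1) < a + 1" by (rule less_mult_imp_div_less)
  then show ?thesis by simp
qed

lemma same_residue_same_block_diff:
  fixes a b t k :: nat
  assumes "0 < t" "a < b" "a mod t = b mod t" "a div t div (k + 1) = b div t div (k + 1)"
  shows "\<exists>i\<in>{1..k}. b - a = i * t"
proof -
  have "t * (a div t) < t * (b div t)"
    using assms(2,3) mult_div_mod_eq[of t a] mult_div_mod_eq[of t b] by linarith
  then have "a div t < b div t" by simp
  moreover have "b div t < a div t + (k + 1)"
    using div_mult_mod_eq[of "a div t" "k + 1", unfolded assms(4)] div_mult_mod_eq[of "b div t" "k + 1"]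
      mod_less_divisor[of "k + 1" "b div t"] by linarith
  moreover have "b - a = b div t * t - a div t * t"
    using assms(3) div_mult_mod_eq[of a t] div_mult_mod_eq[of b t] by linarith
  then have "b - a = (b div t - a div t) * t" by (simp add: diff_mult_distrib)
  ultimately show ?thesis by (intro bexI[of _ "b div t - a div t"]) auto
qed

lemma div_add_pred_eq:
  fixes m d :: nat
  assumes "0 < d"
  shows "(m + d - 1) div d = m div d + (if m mod d = 0 then 0 else 1)"
proof -
  have "m + d - 1 = (m mod d + d - 1) + m div d * d"
    using assms div_mult_mod_eq[of m d] by linarith
  then have "(m + d - 1) div d = ((m mod d + d - 1) + m div d * d) div d"
    by (rule arg_cong)
  also have "\<dots> = (m mod d + d - 1) div d + m div d"
    using assms div_mult_self1[of d "m mod d + d - 1" "m div d"] by (simp only: add.commute)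
  finally have "(m + d - 1) div d = (m mod d + d - 1) div d + m div d" .
  moreover have "(m mod d + d - 1) div d = (if m mod d = 0 then 0 else 1)"
  proof (cases "m mod d = 0")
    case False
    have "m mod d < d" using assms by simp
    then show ?thesis using False by (intro div_nat_eqI) auto
  qed (use assms in simp)
  ultimately show ?thesis by simp
qed

lemma ceiling_of_nat_divide:
  fixes m d :: nat
  assumes "0 < d"
  shows "\<lceil>real m / real d\<rceil> = int ((m + d - 1) div d)"
proof -
  have "real m / real d = real (m div d) \<longleftrightarrow> real m = real (m div d * d)"
    using assms by (simp add: field_simps)
  also have "\<dots> \<longleftrightarrow> m mod d = 0"
    unfolding of_nat_eq_iff using div_mult_mod_eq[of m d] by linarith
  finally show ?thesis
    unfolding ceiling_altdef[of "real m / real d"] div_add_pred_eq[OF assms] floor_divide_of_nat_eq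
    by simp
qed

lemma sum_lessThan_split_indicator:
  fixes f :: "nat \<Rightarrow> nat"
  assumes "p \<le> t"
  shows "(\<Sum>r<t. f (q + (if r < p then 1 else 0))) = p * f (q + 1) + (t - p) * f q"
proof -
  have "{..<t} = {..<p} \<union> {p..<t}" "{..<p} \<inter> {p..<t} = {}" using assms by auto
  then have "(\<Sum>r<t. f (q + (if r < p then 1 else 0)))
      = (\<Sum>r<p. f (q + (if r < p then 1 else 0))) + (\<Sum>r\<in>{p..<t}. f (q + (if r < p then 1 else 0)))"
    by (simp add: sum.union_disjoint)
  also have "\<dots> = p * f (q + 1) + (t - p) * f q" by simp
  finally show ?thesis .
qed

definition residue_class :: "nat \<Rightarrow> nat \<Rightarrow> nat \<Rightarrow> nat set" where
  "residue_class n t r = {x \<in> {1..n}. (x - 1) mod t = r}"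

lemma residue_class_eq_image:
  assumes "r < t"
  shows "residue_class n t r = (\<lambda>j. 1 + r + t * j) ` {..< n div t + (if r < n mod t then 1 else 0)}"
    (is "_ = ?f ` {..< ?m}")
proof -
  have "n mod t < t" using assms by simp
  then have below_n: "r + t * j < n \<longleftrightarrow> j < ?m" for j
    using less_mult_add_iff[OF assms, of "n mod t" j "n div t"] mult_div_mod_eq[of t n]
    by (simp only: add.commute)
  show ?thesis
  proof (intro set_eqI iffI)
    fix x assume "x \<in> residue_class n t r"
    then have "x = ?f ((x - 1) div t)" "r + t * ((x - 1) div t) < n"
      unfolding residue_class_def using mult_div_mod_eq[of t "x - 1"] by auto
    then show "x \<in> ?f ` {..< ?m}" using below_n by blast
  next
    fix x assume "x \<in> ?f ` {..< ?m}"
    then obtain j where "x = ?f j" "r + t * j < n" using below_n by blast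
    moreover have "(r + t * j) mod t = r" using assms by simp
    ultimately show "x \<in> residue_class n t r"
      unfolding residue_class_def by simp
  qed
qed

lemma card_residue_class:
  assumes "r < t"
  shows "card (residue_class n t r) = n div t + (if r < n mod t then 1 else 0)"
proof -
  have "inj_on (\<lambda>j. 1 + r + t * j) A" for A using assms by (intro inj_onI) simp
  then show ?thesis unfolding residue_class_eq_image[OF assms] by (simp add: card_image)
qed

lemma clique_residues_eq:
  assumes "is_clique n (multiples_upto t k) K" "x \<in> K" "y \<in> K"
  shows "(x - 1) mod t = (y - 1) mod t"
proof (cases "x = y")
  case False
  then have adj: "toeplitz_adj n (multiples_upto t k) x y"
    using assms unfolding is_clique_def by blast
  then have "x \<ge> 1" "y \<ge> 1" unfolding toeplitz_adj_def by auto
  moreover obtain i where "(if x \<le> y then y - x else x - y) = i * t"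
    using adj unfolding toeplitz_adj_def by auto
  ultimately have "x - 1 = (y - 1) + i * t \<or> y - 1 = (x - 1) + i * t"
    by (cases "x \<le> y") auto
  then show ?thesis by auto
qed simp

lemma card_clique_le:
  assumes "is_clique n (multiples_upto t k) K"
  shows "card K \<le> k + 1"
proof (cases "K = {}")
  case False
  have "finite K" using assms finite_subset unfolding is_clique_def by blast
  define a where "a = Min K"
  have "K \<subseteq> (\<lambda>i. a + i * t) ` {0..k}"
  proof
    fix x assume "x \<in> K"
    show "x \<in> (\<lambda>i. a + i * t) ` {0..k}"
    proof (cases "x = a")
      case False
      with \<open>x \<in> K\<close> have "toeplitz_adj n (multiples_upto t k) a x" "a \<le> x"
        using assms \<open>finite K\<close> \<open>K \<noteq> {}\<close> unfolding is_clique_def a_def by auto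
      then obtain i where "i \<in> {1..k}" "x = a + i * t"
        unfolding toeplitz_adj_def by auto
      then show ?thesis by force
    qed force
  qed
  then have "card K \<le> card ((\<lambda>i. a + i * t) ` {0..k})" by (rule card_mono[rotated]) simp
  also have "\<dots> \<le> k + 1" using card_image_le[of "{0..k}" "\<lambda>i. a + i * t"] by simp
  finally show ?thesis .
qed simp

lemma residue_block_clique:
  assumes "0 < t"
  shows "is_clique n (multiples_upto t k) {x \<in> residue_class n t r. (x - 1) div t div (k + 1) = q}"
    (is "is_clique n ?T ?B")
proof -
  have adj: "toeplitz_adj n ?T x y" if "x \<in> ?B" "y \<in> ?B" "x < y" for x y
  proof -
    have "x - 1 < y - 1" "(x - 1) mod t = (y - 1) mod t"
      "(x - 1) div t div (k + 1) = (y - 1) div t div (k + 1)"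
      using that unfolding residue_class_def by auto
    then obtain i where "i \<in> {1..k}" "(y - 1) - (x - 1) = i * t"
      using same_residue_same_block_diff[OF assms] by blast
    moreover have "x \<in> {1..n}" "y \<in> {1..n}" using that unfolding residue_class_def by auto
    ultimately have "y - x \<in> ?T" by (auto intro: rev_image_eqI)
    then show ?thesis
      using \<open>x < y\<close> \<open>x \<in> {1..n}\<close> \<open>y \<in> {1..n}\<close> unfolding toeplitz_adj_def by simp
  qed
  show ?thesis unfolding is_clique_def
  proof (intro conjI ballI impI)
    show "?B \<subseteq> {1..n}" unfolding residue_class_def by auto
  next
    fix x y assume "x \<in> ?B" "y \<in> ?B" "x \<noteq> y"
    then consider "x < y" | "y < x" by linarith
    then show "toeplitz_adj n ?T x y"
      by cases (use adj toeplitz_adj_sym \<open>x \<in> ?B\<close> \<open>y \<in> ?B\<close> in blast)+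
  qed
qed

lemma clique_cover_card_ge:
  assumes cover: "is_clique_cover n (multiples_upto t k) C" and "finite C"
  shows "(\<Sum>r<t. (card (residue_class n t r) + k) div (k + 1)) \<le> card C"
proof -
  define meets where "meets r = {K \<in> C. K \<inter> residue_class n t r \<noteq> {}}" for r
  have cliques: "is_clique n (multiples_upto t k) K" if "K \<in> C" for K
    using cover that unfolding is_clique_cover_def by blast
  have "card (residue_class n t r) \<le> card (meets r) * (k + 1)" for r
  proof -
    have "residue_class n t r \<subseteq> \<Union>(meets r)"
      using cover unfolding is_clique_cover_def meets_def residue_class_def by blast
    moreover have "finite (\<Union>(meets r))"
      using cover unfolding is_clique_cover_def meets_def by (auto intro: finite_subset)
    ultimately have "card (residue_class n t r) \<le> card (\<Union>(meets r))" by (rule card_mono[rotated])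
    also have "\<dots> \<le> (\<Sum>K\<in>meets r. card K)" by (rule card_Union_le_sum_card)
    also have "\<dots> \<le> card (meets r) * (k + 1)"
      using sum_bounded_above[of "meets r" card "k + 1"] card_clique_le cliques
      unfolding meets_def by force
    finally show ?thesis .
  qed
  then have "(\<Sum>r<t. (card (residue_class n t r) + k) div (k + 1)) \<le> (\<Sum>r<t. card (meets r))"
    by (intro sum_mono ceiling_div_le_of_le_mult)
  also have "\<dots> = card (\<Union>r<t. meets r)"
  proof (rule card_UN_disjoint[symmetric])
    show "\<forall>r\<in>{..<t}. finite (meets r)" using \<open>finite C\<close> unfolding meets_def by simp
    show "\<forall>r\<in>{..<t}. \<forall>r'\<in>{..<t}. r \<noteq> r' \<longrightarrow> meets r \<inter> meets r' = {}"
      using clique_residues_eq[OF cliques] unfolding meets_def residue_class_def by blast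
  qed simp
  also have "\<dots> \<le> card C" using \<open>finite C\<close> unfolding meets_def by (intro card_mono) auto
  finally show ?thesis .
qed

lemma residue_block_cover:
  assumes "0 < t"
  shows "\<exists>C. is_clique_cover n (multiples_upto t k) C \<and> finite C \<and>
    card C \<le> (\<Sum>r<t. (card (residue_class n t r) + k) div (k + 1))"
proof -
  define block where "block = (\<lambda>(r, q). {x \<in> residue_class n t r. (x - 1) div t div (k + 1) = q})"
  define I where "I = (SIGMA r:{..<t}. {..< (card (residue_class n t r) + k) div (k + 1)})"
  have "{1..n} \<subseteq> \<Union>(block ` I)"
  proof
    fix x assume "x \<in> {1..n}"
    define r where "r = (x - 1) mod t"
    have "r < t" "x \<in> residue_class n t r"
      using assms \<open>x \<in> {1..n}\<close> unfolding r_def residue_class_def by auto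
    then obtain j where j: "j < card (residue_class n t r)" "x = 1 + r + t * j"
      using residue_class_eq_image[of r t n] card_residue_class[of r t n] by auto
    then have "(r, j div (k + 1)) \<in> I"
      using \<open>r < t\<close> div_less_ceiling_div unfolding I_def by blast
    moreover have "x \<in> block (r, j div (k + 1))"
      using \<open>x \<in> residue_class n t r\<close> \<open>r < t\<close> unfolding block_def j(2) by simp
    ultimately show "x \<in> \<Union>(block ` I)" by blast
  qed
  then have "is_clique_cover n (multiples_upto t k) (block ` I)"
    using residue_block_clique[OF assms]
    unfolding is_clique_cover_def block_def is_clique_def by fast
  moreover have "card (block ` I) \<le> (\<Sum>r<t. (card (residue_class n t r) + k) div (k + 1))"
    using card_image_le[of I block] unfolding I_def by simp
  ultimately show ?thesis unfolding I_def by blast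
qed

lemma theta_v_multiples:
  assumes "0 < t"
  shows "theta_v n (multiples_upto t k) = (\<Sum>r<t. (card (residue_class n t r) + k) div (k + 1))"
proof (rule antisym)
  obtain C where "is_clique_cover n (multiples_upto t k) C" "finite C"
    "card C \<le> (\<Sum>r<t. (card (residue_class n t r) + k) div (k + 1))"
    using residue_block_cover[OF assms] by blast
  then show "theta_v n (multiples_upto t k) \<le> (\<Sum>r<t. (card (residue_class n t r) + k) div (k + 1))"
    using theta_v_le by (blast intro: order_trans)
next
  obtain C where "is_clique_cover n (multiples_upto t k) C" "finite C"
    and theta: "card C = theta_v n (multiples_upto t k)"
    using theta_v_attained by blast
  then have "(\<Sum>r<t. (card (residue_class n t r) + k) div (k + 1)) \<le> card C"
    by (intro clique_cover_card_ge)
  then show "(\<Sum>r<t. (card (residue_class n t r) + k) div (k + 1)) \<le> theta_v n (multiples_upto t k)"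
    unfolding theta .
qed

theorem theorem2p10:
  fixes n t k s :: nat
  assumes "n \<ge> 2" "t \<ge> 1" "k \<ge> 1" "n > (2*k - 1) * t"
    and "1 \<le> s" "s \<le> t" "s mod t = n mod t"
  shows "int (theta_v n ((\<lambda>i. i * t) ` {1..k})) =
     int s * \<lceil>real_of_int \<lceil>real n / real t\<rceil> / real (k + 1)\<rceil>
     + int (t - s) * \<lceil>real_of_int \<lfloor>real n / real t\<rfloor> / real (k + 1)\<rceil>"
proof -
  define q where "q = n div t"
  define p where "p = n mod t"
  define c where "c m = (m + k) div (k + 1)" for m
  have "0 < t" using \<open>t \<ge> 1\<close> by simp
  then have "p < t" unfolding p_def by simp
  have "theta_v n (multiples_upto t k) = (\<Sum>r<t. c (q + (if r < p then 1 else 0)))"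
    unfolding theta_v_multiples[OF \<open>0 < t\<close>] c_def q_def p_def
    by (intro sum.cong) (simp_all add: card_residue_class)
  also have "\<dots> = p * c (q + 1) + (t - p) * c q"
    using \<open>p < t\<close> by (intro sum_lessThan_split_indicator) simp
  finally have theta: "theta_v n (multiples_upto t k) = p * c (q + 1) + (t - p) * c q" .
  have floor: "\<lfloor>real n / real t\<rfloor> = int q"
    unfolding q_def using floor_divide_of_nat_eq[of n t] by simp
  have ceiling: "\<lceil>real n / real t\<rceil> = int (q + (if p = 0 then 0 else 1))"
    unfolding ceiling_of_nat_divide[OF \<open>0 < t\<close>] div_add_pred_eq[OF \<open>0 < t\<close>] q_def p_def ..
  have ceiling_c: "\<lceil>real_of_int (int m) / real (k + 1)\<rceil> = int (c m)" for m
    using ceiling_of_nat_divide[of "k + 1" m] unfolding c_def by simp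
  have "s = (if p = 0 then t else p)"
    using assms(5-7) \<open>p < t\<close> unfolding p_def
    by (cases "s = t") (auto simp: mod_less)
  then show ?thesis unfolding theta floor ceiling ceiling_c by auto
qed

end
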